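(* Let $r>1$, $0\le m<\infty$, $0\le C<\infty$, and for $p\in\mathcal M_1^+$ and $s\in\{1,r\}$ let $M_s(p)=\sum_{k\ge0}|k-m|^sp_k$. Let $$\mathcal M^+_{1,m,C}=\Big\{p\in\mathcal M_1^+:\ \sum_{k\ge0}k\,p_k=m,\ M_r(p)\le C\Big\},$$ equipped with the metric induced by the total variation norm $\|x\|_1=\sum_k|x_k|$. Then $\mathcal M^+_{1,m,C}$ is compact and convex. Both $M_1$ and $M_r$ satisfy $M_s(\mathcal R_0(p))\le M_s(p)$, with equality if and only if $p$ is a fixed point of $\mathcal R_0$. Furthermore, $M_1$ is a continuous map from $\mathcal M^+_{1,m,C}$ to $[0,\infty)$ and a Lyapunov function for the continuous-time dynamics $\frac{d}{dt}p(t)=\mathcal R_0(p(t))-p(t)$ on $\mathcal M^+_{1,m,C}$.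
   Context: $\mathcal M_1^+$ is the set of probability measures on $\mathbb N_0$, identified with nonnegative sequences summing to $1$, inside $\ell^1(\mathbb N_0)$. $\mathcal R_0(p)_i=\sum_{k,\ell\ge0,\ \min\{k,\ell\}\le i\le\max\{k,\ell\}}\frac{p_kp_\ell}{1+|k-\ell|}$. For an initial value problem $\frac{d}{dt}x(t)=f(x(t))$, $x(0)=x_0\in X$, with $f$ locally Lipschitz on an open subset of a Banach space containing $X$, a continuous function $L:X\to\mathbb R$ is a Lyapunov function if its orbital derivative $\dot L(x_0)=\liminf_{t\to0^+}\frac1t\big(L(x(t))-L(x_0)\big)$ satisfies $\dot L(x_0)\le0$ for all $x_0\in X$. *)

theory Defs
  imports "HOL-Analysis.Analysis"
begin

definition l1_space :: "(nat \<Rightarrow> real) set" where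
  "l1_space = {x. summable (\<lambda>k. \<bar>x k\<bar>)}"

definition l1_norm :: "(nat \<Rightarrow> real) \<Rightarrow> real" where
  "l1_norm x = (if summable (\<lambda>k. \<bar>x k\<bar>) then (\<Sum>k. \<bar>x k\<bar>) else 0)"

definition l1_dist :: "(nat \<Rightarrow> real) \<Rightarrow> (nat \<Rightarrow> real) \<Rightarrow> real" where
  "l1_dist x y = l1_norm (\<lambda>k. x k - y k)"

lemma l1_diff_summable:
  assumes "x \<in> l1_space" "y \<in> l1_space"
  shows "summable (\<lambda>k. \<bar>x k - y k\<bar>)"
proof -
  have "summable (\<lambda>k. \<bar>x k\<bar> + \<bar>y k\<bar>)"
    using assms by (simp add: l1_space_def summable_add)
  then show ?thesis
    by (rule summable_comparison_test'[where N=0]) auto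
qed

interpretation l1: Metric_space l1_space l1_dist
proof
  fix x y show "0 \<le> l1_dist x y"
    unfolding l1_dist_def l1_norm_def by (auto intro: suminf_nonneg)
next
  fix x y show "l1_dist x y = l1_dist y x"
    unfolding l1_dist_def l1_norm_def by (simp add: abs_minus_commute)
next
  fix x y assume xy: "x \<in> l1_space" "y \<in> l1_space"
  show "(l1_dist x y = 0) = (x = y)"
  proof
    assume "l1_dist x y = 0"
    then have "\<forall>k. \<bar>x k - y k\<bar> = 0"
      using suminf_eq_zero_iff[OF l1_diff_summable[OF xy]] l1_diff_summable[OF xy]
      unfolding l1_dist_def l1_norm_def by auto
    then show "x = y" by auto
  qed (simp add: l1_dist_def l1_norm_def)
next
  fix x y z assume xyz: "x \<in> l1_space" "y \<in> l1_space" "z \<in> l1_space"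
  have s1: "summable (\<lambda>k. \<bar>x k - y k\<bar>)" and s2: "summable (\<lambda>k. \<bar>y k - z k\<bar>)"
    and s3: "summable (\<lambda>k. \<bar>x k - z k\<bar>)"
    using xyz l1_diff_summable by auto
  have "(\<Sum>k. \<bar>x k - z k\<bar>) \<le> (\<Sum>k. \<bar>x k - y k\<bar> + \<bar>y k - z k\<bar>)"
    by (rule suminf_le) (use s1 s2 s3 in \<open>auto intro: summable_add\<close>)
  also have "\<dots> = (\<Sum>k. \<bar>x k - y k\<bar>) + (\<Sum>k. \<bar>y k - z k\<bar>)"
    using s1 s2 by (rule suminf_add[symmetric])
  finally show "l1_dist x z \<le> l1_dist x y + l1_dist y z"
    unfolding l1_dist_def l1_norm_def using s1 s2 s3 by simp
qed

definition prob_seqs :: "(nat \<Rightarrow> real) set" where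
  "prob_seqs = {p. (\<forall>k. 0 \<le> p k) \<and> p sums 1}"

definition R0 :: "(nat \<Rightarrow> real) \<Rightarrow> nat \<Rightarrow> real" where
  "R0 p i = (\<Sum>\<^sub>\<infinity>(k, l) \<in> {(k, l). min k l \<le> i \<and> i \<le> max k l}.
              p k * p l / (1 + \<bar>real k - real l\<bar>))"

definition moment :: "real \<Rightarrow> real \<Rightarrow> (nat \<Rightarrow> real) \<Rightarrow> real" where
  "moment m s p = (\<Sum>k. \<bar>real k - m\<bar> powr s * p k)"

definition has_moment :: "real \<Rightarrow> real \<Rightarrow> (nat \<Rightarrow> real) \<Rightarrow> bool" where
  "has_moment m s p \<longleftrightarrow> summable (\<lambda>k. \<bar>real k - m\<bar> powr s * p k)"

definition Mset :: "real \<Rightarrow> real \<Rightarrow> real \<Rightarrow> (nat \<Rightarrow> real) set" where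
  "Mset r m C = {p \<in> prob_seqs. summable (\<lambda>k. real k * p k) \<and> (\<Sum>k. real k * p k) = m
                    \<and> has_moment m r p \<and> moment m r p \<le> C}"

definition l1_has_derivative_within ::
  "(real \<Rightarrow> nat \<Rightarrow> real) \<Rightarrow> (nat \<Rightarrow> real) \<Rightarrow> real \<Rightarrow> real set \<Rightarrow> bool" where
  "l1_has_derivative_within x v t T \<longleftrightarrow>
     (\<forall>s. x s - x t \<in> l1_space) \<and> v \<in> l1_space \<and>
     ((\<lambda>s. l1_norm (\<lambda>k. (x s k - x t k) / (s - t) - v k)) \<longlongrightarrow> 0) (at t within T)"

end

theory Submission
  imports Defs "HOL-Real_Asymp.Real_Asymp"
begin

text \<open>\<^const>\<open>R0\<close> spreads the mass \<open>p k * p l\<close> of every pair \<open>(k, l)\<close> uniformly over the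
  lattice points between \<open>k\<close> and \<open>l\<close>. Hence, for a weight \<open>g\<close>, the \<open>g\<close>-moment of \<open>R0 p\<close> is
  the average, with weights \<open>p k * p l\<close>, of the mean of \<open>g\<close> over \<open>{min k l..max k l}\<close>. For
  \<open>g i = 1\<close> and \<open>g i = i\<close> that mean is \<open>(g k + g l) / 2\<close>, so \<^const>\<open>R0\<close> preserves mass and
  mean; for the convex weight \<open>\<bar>i - m\<bar> powr s\<close> it is at most \<open>(g k + g l) / 2\<close> (a discrete
  Hermite--Hadamard inequality), strictly when \<open>k + 2 \<le> l\<close> and \<open>k < m < l\<close>. Equality of the
  moments therefore confines the support of a sequence with mean \<open>m\<close> to two consecutive
  integers, and there \<^const>\<open>R0\<close> acts as the identity.

  Because the mean is \<open>m\<close>, \<open>M\<^sub>1 p = 2 * (\<Sum>k < m. (m - k) * p k)\<close> is a finite linear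
  functional of \<open>p\<close>: it is Lipschitz for the l1 distance, and along the flow its right
  derivative is \<open>M\<^sub>1 (R0 p) - M\<^sub>1 p \<le> 0\<close>.

  For compactness, \<open>M\<^sub>r p \<le> C\<close> with \<open>r > 1\<close> makes the tails \<open>\<Sum>k \<ge> N. (1 + k) * p k\<close>
  uniformly small, so a pointwise convergent subsequence (Tychonoff) keeps mass and mean in
  the limit and converges in l1.\<close>

section \<open>Supporting lines of \<open>\<bar>x\<bar> powr s\<close> and a discrete Hermite--Hadamard inequality\<close>

definition abs_powr_slope :: "real \<Rightarrow> real \<Rightarrow> real" where
  "abs_powr_slope s w = s * sgn w * \<bar>w\<bar> powr (s - 1)"

lemma powr_above_tangent:
  fixes s u w :: real
  assumes "1 \<le> s" "0 < w" "0 < u"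
  shows "w powr s + s * w powr (s - 1) * (u - w) \<le> u powr s"
proof -
  have "s * w powr (s - 1) * (u - w) \<le> u powr s - w powr s"
  proof (rule f''_imp_f'[of "{0<..}"])
    show "DERIV (\<lambda>x. x powr s) x :> s * x powr (s - 1)" if "x \<in> {0<..}" for x
      using that by (auto intro!: derivative_eq_intros)
    show "DERIV (\<lambda>x. s * x powr (s - 1)) x :> s * ((s - 1) * x powr (s - 1 - 1))"
      if "x \<in> {0<..}" for x
      using that by (auto intro!: derivative_eq_intros)
  qed (use assms in auto)
  then show ?thesis by simp
qed

lemma abs_powr_slope_uminus: "abs_powr_slope s (- w) = - abs_powr_slope s w"
  by (simp add: abs_powr_slope_def sgn_minus)

lemma abs_powr_tangent_nonpos:
  fixes s u w :: real
  assumes "1 \<le> s" "w \<le> 0" "0 \<le> u"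
  shows "\<bar>w\<bar> powr s + abs_powr_slope s w * (u - w) \<le> 0"
proof (cases "w = 0")
  case False
  then have w: "w < 0" using assms by simp
  have "\<bar>w\<bar> powr (s - 1) * w = - (\<bar>w\<bar> powr s)"
    using w by (simp add: powr_diff)
  then have "\<bar>w\<bar> powr s + abs_powr_slope s w * (u - w)
      = (1 - s) * \<bar>w\<bar> powr s - s * \<bar>w\<bar> powr (s - 1) * u"
    using w unfolding abs_powr_slope_def by (simp add: right_diff_distrib mult.assoc algebra_simps)
  also have "\<dots> \<le> 0"
    using assms by (smt (verit) mult_nonneg_nonneg mult_nonpos_nonneg powr_ge_zero)
  finally show ?thesis .
qed (simp add: abs_powr_slope_def)

lemma abs_powr_above_tangent:
  fixes s u w :: real
  assumes s: "1 \<le> s"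
  shows "\<bar>w\<bar> powr s + abs_powr_slope s w * (u - w) \<le> \<bar>u\<bar> powr s"
proof -
  have same_sign: "\<bar>w\<bar> powr s + abs_powr_slope s w * (u - w) \<le> \<bar>u\<bar> powr s"
    if "0 < w" "0 < u" for u w
    using powr_above_tangent[OF s that] that by (simp add: abs_powr_slope_def)
  have across: "\<bar>w\<bar> powr s + abs_powr_slope s w * (u - w) \<le> \<bar>u\<bar> powr s"
    if "w \<le> 0" "0 \<le> u" for u w
    using abs_powr_tangent_nonpos[OF s that] by (smt (verit) powr_ge_zero)
  have mirror: "\<bar>- w\<bar> powr s + abs_powr_slope s (- w) * (- u - - w)
      = \<bar>w\<bar> powr s + abs_powr_slope s w * (u - w)" for u w
    by (simp add: abs_powr_slope_uminus algebra_simps)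
  consider "0 < w" "0 < u" | "w < 0" "u < 0" | "w \<le> 0" "0 \<le> u" | "0 \<le> w" "u \<le> 0"
    by linarith
  then show ?thesis
  proof cases
    case 2
    then show ?thesis using same_sign[of "- w" "- u"] mirror[of w u] by simp
  next
    case 4
    then show ?thesis using across[of "- w" "- u"] mirror[of w u] by simp
  qed (use same_sign across in auto)
qed

lemma abs_powr_above_tangent_strict:
  fixes s u w :: real
  assumes s: "1 \<le> s" and sign_change: "w * u \<le> 0" and "u \<noteq> 0"
  shows "\<bar>w\<bar> powr s + abs_powr_slope s w * (u - w) < \<bar>u\<bar> powr s"
proof -
  have "\<bar>w\<bar> powr s + abs_powr_slope s w * (u - w) \<le> 0"
  proof (cases "0 < u")
    case True
    then have "w \<le> 0" using sign_change by (simp add: mult_le_0_iff)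
    with True show ?thesis using abs_powr_tangent_nonpos[OF s] by simp
  next
    case False
    then have "0 \<le> w" "u < 0" using sign_change \<open>u \<noteq> 0\<close> by (auto simp: mult_le_0_iff)
    then show ?thesis
      using abs_powr_tangent_nonpos[OF s, of "- w" "- u"]
      by (simp add: abs_powr_slope_uminus algebra_simps)
  qed
  moreover have "0 < \<bar>u\<bar> powr s" using \<open>u \<noteq> 0\<close> by simp
  ultimately show ?thesis by linarith
qed

lemma chord_above_of_tangents:
  fixes \<phi> d :: "real \<Rightarrow> real"
  assumes tangent: "\<And>x y. \<phi> x + d x * (y - x) \<le> \<phi> y" and "a \<le> x" "x \<le> b"
  shows "(b - a) * \<phi> x \<le> (b - x) * \<phi> a + (x - a) * \<phi> b"
proof -
  have "(b - x) * (\<phi> x + d x * (a - x)) \<le> (b - x) * \<phi> a"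
    "(x - a) * (\<phi> x + d x * (b - x)) \<le> (x - a) * \<phi> b"
    using tangent assms(2,3) by (auto intro: mult_left_mono)
  moreover have "(b - x) * (\<phi> x + d x * (a - x)) + (x - a) * (\<phi> x + d x * (b - x)) = (b - a) * \<phi> x"
    by (simp add: algebra_simps)
  ultimately show ?thesis by linarith
qed

lemma chord_above_of_tangents_strict:
  fixes \<phi> d :: "real \<Rightarrow> real"
  assumes tangent: "\<And>x y. \<phi> x + d x * (y - x) \<le> \<phi> y" and "a < x" "x < b"
    and "\<phi> x + d x * (a - x) < \<phi> a \<or> \<phi> x + d x * (b - x) < \<phi> b"
  shows "(b - a) * \<phi> x < (b - x) * \<phi> a + (x - a) * \<phi> b"
proof -
  have "(b - x) * (\<phi> x + d x * (a - x)) \<le> (b - x) * \<phi> a"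
    "(x - a) * (\<phi> x + d x * (b - x)) \<le> (x - a) * \<phi> b"
    using tangent assms(2,3) by (auto intro: mult_left_mono)
  moreover have "(b - x) * (\<phi> x + d x * (a - x)) < (b - x) * \<phi> a \<or>
      (x - a) * (\<phi> x + d x * (b - x)) < (x - a) * \<phi> b"
    using assms(2-4) by auto
  moreover have "(b - x) * (\<phi> x + d x * (a - x)) + (x - a) * (\<phi> x + d x * (b - x)) = (b - a) * \<phi> x"
    by (simp add: algebra_simps)
  ultimately show ?thesis by linarith
qed

lemma sum_chords:
  fixes A B :: real
  shows "2 * (\<Sum>j = 0..n. (real n - real j) * A + real j * B) = real n * ((real n + 1) * (A + B))"
proof -
  have "2 * (\<Sum>j = 0..n. (real n - real j) * A + real j * B)
      = 2 * (\<Sum>j = 0..n. real n * A + real j * (B - A))"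
    by (simp add: algebra_simps)
  also have "\<dots> = (real n + 1) * (2 * (real n * A) + real n * (B - A))"
    by (rule double_arith_series)
  finally show ?thesis by (simp add: algebra_simps)
qed

lemma sum_le_trapezoid:
  fixes \<phi> d :: "real \<Rightarrow> real"
  assumes tangent: "\<And>x y. \<phi> x + d x * (y - x) \<le> \<phi> y"
  shows "2 * (\<Sum>j = 0..n. \<phi> (a + real j)) \<le> (real n + 1) * (\<phi> a + \<phi> (a + real n))"
proof (cases "n = 0")
  case False
  have "real n * (2 * (\<Sum>j = 0..n. \<phi> (a + real j)))
      = 2 * (\<Sum>j = 0..n. (a + real n - a) * \<phi> (a + real j))"
    unfolding sum_distrib_left by (simp add: mult.left_commute)
  also have "\<dots> \<le> 2 * (\<Sum>j = 0..n. (real n - real j) * \<phi> a + real j * \<phi> (a + real n))"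
  proof (intro mult_left_mono sum_mono)
    fix j assume "j \<in> {0..n}"
    then show "(a + real n - a) * \<phi> (a + real j) \<le> (real n - real j) * \<phi> a + real j * \<phi> (a + real n)"
      using chord_above_of_tangents[OF tangent, of a "a + real j" "a + real n"] by simp
  qed simp
  also have "\<dots> = real n * ((real n + 1) * (\<phi> a + \<phi> (a + real n)))"
    by (rule sum_chords)
  finally show ?thesis using False by simp
qed simp

lemma sum_less_trapezoid:
  fixes \<phi> d :: "real \<Rightarrow> real"
  assumes tangent: "\<And>x y. \<phi> x + d x * (y - x) \<le> \<phi> y" and n: "2 \<le> n"
    and strict: "\<phi> (a + 1) + d (a + 1) * (- 1) < \<phi> a
      \<or> \<phi> (a + 1) + d (a + 1) * (real n - 1) < \<phi> (a + real n)"
  shows "2 * (\<Sum>j = 0..n. \<phi> (a + real j)) < (real n + 1) * (\<phi> a + \<phi> (a + real n))"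
proof -
  have "real n * (2 * (\<Sum>j = 0..n. \<phi> (a + real j)))
      = 2 * (\<Sum>j = 0..n. (a + real n - a) * \<phi> (a + real j))"
    unfolding sum_distrib_left by (simp add: mult.left_commute)
  also have "\<dots> < 2 * (\<Sum>j = 0..n. (real n - real j) * \<phi> a + real j * \<phi> (a + real n))"
  proof (intro mult_strict_left_mono sum_strict_mono_ex1)
    show "\<forall>j\<in>{0..n}. (a + real n - a) * \<phi> (a + real j)
        \<le> (real n - real j) * \<phi> a + real j * \<phi> (a + real n)"
      using chord_above_of_tangents[OF tangent, of a "a + real _" "a + real n"] by simp
    have "(a + real n - a) * \<phi> (a + 1) < (a + real n - (a + 1)) * \<phi> a + (a + 1 - a) * \<phi> (a + real n)"
      using n strict by (intro chord_above_of_tangents_strict[OF tangent]) auto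
    then show "\<exists>j\<in>{0..n}. (a + real n - a) * \<phi> (a + real j)
        < (real n - real j) * \<phi> a + real j * \<phi> (a + real n)"
      using n by (intro bexI[of _ 1]) auto
  qed simp_all
  also have "\<dots> = real n * ((real n + 1) * (\<phi> a + \<phi> (a + real n)))"
    by (rule sum_chords)
  finally show ?thesis using n by simp
qed

definition interval_mean :: "(nat \<Rightarrow> real) \<Rightarrow> nat \<Rightarrow> nat \<Rightarrow> real" where
  "interval_mean g k l = (\<Sum>i\<in>{min k l..max k l}. g i) / (1 + \<bar>real k - real l\<bar>)"

lemma card_interval_between: "real (card {min k l..max k l}) = 1 + \<bar>real k - real l\<bar>"
  by (cases "k \<le> l") (auto simp: min_def max_def of_nat_diff)

lemma interval_mean_commute: "interval_mean g k l = interval_mean g l k"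
  by (simp add: interval_mean_def min.commute max.commute abs_minus_commute)

lemma interval_mean_const: "interval_mean (\<lambda>_. c) k l = c"
proof -
  have "0 < 1 + \<bar>real k - real l\<bar>" by (simp add: add_pos_nonneg)
  then show ?thesis
    by (simp add: interval_mean_def card_interval_between del: card_atLeastAtMost)
qed

lemma interval_mean_of_nat: "interval_mean real k l = (real k + real l) / 2"
proof (induction k l rule: linorder_wlog)
  case (le k l)
  have "2 * (\<Sum>i\<in>{k..l}. real i) = 2 * (\<Sum>j = 0..l - k. real k + real j * 1)"
    using le by (simp add: sum.atLeastAtMost_shift_0[OF le] o_def)
  also have "\<dots> = (real (l - k) + 1) * (real k + real l)"
    using le by (subst double_arith_series) (simp add: of_nat_diff)
  finally show ?case
    using le by (simp add: interval_mean_def of_nat_diff field_simps)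
qed (simp add: interval_mean_commute)

lemma abs_powr_tangent_shifted:
  fixes s m x y :: real
  assumes "1 \<le> s"
  shows "\<bar>x - m\<bar> powr s + abs_powr_slope s (x - m) * (y - x) \<le> \<bar>y - m\<bar> powr s"
  using abs_powr_above_tangent[OF assms, of "x - m" "y - m"] by simp

lemma interval_mean_abs_powr_le:
  fixes s m :: real
  assumes s: "1 \<le> s"
  defines "f \<equiv> \<lambda>i::nat. \<bar>real i - m\<bar> powr s"
  shows "interval_mean f k l \<le> (f k + f l) / 2"
proof (induction k l rule: linorder_wlog)
  case (le k l)
  have "2 * (\<Sum>i\<in>{k..l}. f i) = 2 * (\<Sum>j = 0..l - k. \<bar>(real k + real j) - m\<bar> powr s)"
    by (simp add: sum.atLeastAtMost_shift_0[OF le] f_def o_def)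
  also have "\<dots> \<le> (real (l - k) + 1) * (f k + f l)"
    using sum_le_trapezoid[OF abs_powr_tangent_shifted[OF s, where m = m], of "real k" "l - k"] le
    by (simp add: f_def of_nat_diff)
  finally show ?case
    using le by (simp add: interval_mean_def of_nat_diff field_simps)
qed (simp add: interval_mean_commute add.commute)

lemma interval_mean_abs_powr_less:
  fixes s m :: real
  assumes s: "1 \<le> s" and kl: "k + 2 \<le> l" and straddle: "real k < m" "m < real l"
  defines "f \<equiv> \<lambda>i::nat. \<bar>real i - m\<bar> powr s"
  shows "interval_mean f k l < (f k + f l) / 2"
proof -
  define \<phi> where "\<phi> x = \<bar>x - m\<bar> powr s" for x
  define d where "d x = abs_powr_slope s (x - m)" for x
  have tangent: "\<phi> x + d x * (y - x) \<le> \<phi> y" for x y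
    unfolding \<phi>_def d_def by (rule abs_powr_tangent_shifted[OF s])
  \<comment> \<open>the supporting line at \<open>k + 1\<close> is strict towards an endpoint across \<open>m\<close>\<close>
  have strict: "\<phi> (real k + 1) + d (real k + 1) * (- 1) < \<phi> (real k)
      \<or> \<phi> (real k + 1) + d (real k + 1) * (real (l - k) - 1) < \<phi> (real k + real (l - k))"
  proof (cases "real k + 1 \<le> m")
    case True
    have "(real k + 1 - m) * (real l - m) \<le> 0"
      using True straddle by (simp add: mult_nonpos_nonneg)
    then have "\<phi> (real k + 1) + d (real k + 1) * (real l - (real k + 1)) < \<phi> (real l)"
      using abs_powr_above_tangent_strict[OF s, of "real k + 1 - m" "real l - m"] straddle
      by (simp add: \<phi>_def d_def diff_diff_eq)
    then show ?thesis using kl by (simp add: of_nat_diff diff_diff_eq)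
  next
    case False
    have "(real k + 1 - m) * (real k - m) \<le> 0"
      using False straddle by (simp add: mult_nonneg_nonpos)
    then have "\<phi> (real k + 1) + d (real k + 1) * (real k - (real k + 1)) < \<phi> (real k)"
      using abs_powr_above_tangent_strict[OF s, of "real k + 1 - m" "real k - m"] straddle
      by (simp add: \<phi>_def d_def diff_diff_eq)
    then show ?thesis by simp
  qed
  have n: "2 \<le> l - k" using kl by simp
  have "2 * (\<Sum>i\<in>{k..l}. f i) = 2 * (\<Sum>j = 0..l - k. \<phi> (real k + real j))"
    using kl by (simp add: sum.atLeastAtMost_shift_0[of k l] f_def \<phi>_def o_def)
  also have "\<dots> < (real (l - k) + 1) * (f k + f l)"
    using sum_less_trapezoid[OF tangent n strict] kl by (simp add: f_def \<phi>_def of_nat_diff)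
  finally show ?thesis
    using kl by (simp add: interval_mean_def of_nat_diff field_simps)
qed

section \<open>Weighted sums against \<^const>\<open>R0\<close>\<close>

lemma has_sum_product_nonneg:
  fixes p q :: "nat \<Rightarrow> real"
  assumes "\<And>k. 0 \<le> p k" "\<And>k. 0 \<le> q k" and P: "(p has_sum a) UNIV" and Q: "(q has_sum b) UNIV"
  shows "((\<lambda>(k, l). p k * q l) has_sum a * b) UNIV"
proof -
  have inner: "((\<lambda>l. p k * q l) has_sum p k * b) UNIV" for k
    using has_sum_cmult_right[OF Q] .
  have outer: "((\<lambda>k. p k * b) has_sum a * b) UNIV"
    using has_sum_cmult_left[OF P] .
  have "(\<lambda>(k, l). p k * q l) summable_on UNIV \<times> UNIV"
    by (rule summable_on_SigmaI[where g = "\<lambda>k. p k * b"])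
      (use inner outer assms(1,2) in \<open>auto simp: summable_on_def\<close>)
  then have "((\<lambda>(k, l). p k * q l) has_sum a * b) (UNIV \<times> UNIV)"
    by (intro has_sum_SigmaI[where g = "\<lambda>k. p k * b"]) (use inner outer in auto)
  then show ?thesis by simp
qed

lemma has_sum_pair_average:
  fixes p g :: "nat \<Rightarrow> real"
  assumes p0: "\<And>k. 0 \<le> p k" and g0: "\<And>k. 0 \<le> g k"
    and P: "(p has_sum 1) UNIV" and G: "((\<lambda>k. g k * p k) has_sum M) UNIV"
  shows "((\<lambda>(k, l). p k * p l * ((g k + g l) / 2)) has_sum M) UNIV"
proof -
  have gp0: "0 \<le> g k * p k" for k using p0 g0 by simp
  have "((\<lambda>kl. ((\<lambda>(k, l). (g k * p k) * p l) kl + (\<lambda>(k, l). p k * (g l * p l)) kl) / 2)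
      has_sum (M * 1 + 1 * M) / 2) UNIV"
    by (intro has_sum_divide_const has_sum_add has_sum_product_nonneg gp0 p0 G P)
  then show ?thesis by (simp add: case_prod_unfold algebra_simps add_divide_distrib)
qed

text \<open>Tonelli: exchange the sum over \<open>i\<close> with the sum over pairs in the definition of
  \<^const>\<open>R0\<close>.\<close>

lemma has_sum_R0_weighted:
  fixes p g :: "nat \<Rightarrow> real"
  assumes p0: "\<And>k. 0 \<le> p k" and g0: "\<And>i. 0 \<le> g i"
    and S: "((\<lambda>(k, l). p k * p l * interval_mean g k l) has_sum S) UNIV"
  shows "((\<lambda>i. g i * R0 p i) has_sum S) UNIV"
proof -
  define F where "F = (\<lambda>((k::nat, l::nat), i::nat). p k * p l * g i / (1 + \<bar>real k - real l\<bar>))"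
  define B where "B = (\<lambda>(k::nat, l::nat). {min k l..max k l})"
  define D where "D = (\<lambda>i. {(k::nat, l::nat). min k l \<le> i \<and> i \<le> max k l})"
  have inner: "((\<lambda>i. F (kl, i)) has_sum (\<lambda>(k, l). p k * p l * interval_mean g k l) kl) (B kl)" for kl
    by (cases kl) (auto simp: F_def B_def interval_mean_def sum_divide_distrib sum_distrib_left
        intro!: has_sum_finiteI)
  have F0: "0 \<le> F x" for x
    using p0 g0 by (auto simp: F_def split: prod.splits)
  have "F summable_on Sigma UNIV B"
    by (rule summable_on_SigmaI[OF inner]) (use S F0 in \<open>auto simp: summable_on_def\<close>)
  then have "(F has_sum S) (Sigma UNIV B)"
    by (rule has_sum_SigmaI[OF inner S])
  moreover have "Sigma UNIV B = prod.swap ` Sigma UNIV D"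
    by (force simp: B_def D_def image_iff)
  ultimately have "((F \<circ> prod.swap) has_sum S) (Sigma UNIV D)"
    by (metis has_sum_reindex inj_swap inj_on_subset subset_UNIV)
  then have swapped: "((\<lambda>(i, kl). F (kl, i)) has_sum S) (Sigma UNIV D)"
    by (simp add: o_def case_prod_unfold prod.swap_def)
  have "((\<lambda>kl. F (kl, i)) has_sum g i * R0 p i) (D i)" for i
  proof -
    have "(\<lambda>kl. F (kl, i)) summable_on D i"
      using summable_on_SigmaD1[of "\<lambda>i kl. F (kl, i)" UNIV D i] swapped
      by (auto simp: summable_on_def)
    moreover have "infsum (\<lambda>kl. F (kl, i)) (D i) = g i * R0 p i"
      by (simp add: F_def D_def R0_def case_prod_unfold ac_simps flip: infsum_cmult_right')
    ultimately show ?thesis by (metis has_sum_infsum)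
  qed
  then show ?thesis
    using has_sum_Sigma'[of "\<lambda>(i, kl). F (kl, i)"] swapped by auto
qed

lemma interval_mean_nonneg: "(\<And>i. 0 \<le> g i) \<Longrightarrow> 0 \<le> interval_mean g k l"
  by (simp add: interval_mean_def sum_nonneg add_nonneg_nonneg)

lemma R0_preserves_weighted_sum:
  fixes p g :: "nat \<Rightarrow> real"
  assumes p0: "\<And>k. 0 \<le> p k" and g0: "\<And>k. 0 \<le> g k"
    and P: "(p has_sum 1) UNIV" and G: "((\<lambda>k. g k * p k) has_sum M) UNIV"
    and affine: "\<And>k l. interval_mean g k l = (g k + g l) / 2"
  shows "((\<lambda>i. g i * R0 p i) has_sum M) UNIV"
  using has_sum_R0_weighted[OF p0 g0] has_sum_pair_average[OF p0 g0 P G] by (simp add: affine)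

lemma R0_weighted_sum_le:
  fixes p g :: "nat \<Rightarrow> real"
  assumes p0: "\<And>k. 0 \<le> p k" and g0: "\<And>k. 0 \<le> g k"
    and P: "(p has_sum 1) UNIV" and G: "((\<lambda>k. g k * p k) has_sum M) UNIV"
    and convex: "\<And>k l. interval_mean g k l \<le> (g k + g l) / 2"
  obtains S where "((\<lambda>i. g i * R0 p i) has_sum S) UNIV" "S \<le> M"
    "\<And>k l. 0 < p k \<Longrightarrow> 0 < p l \<Longrightarrow> interval_mean g k l < (g k + g l) / 2 \<Longrightarrow> S < M"
proof -
  define c where "c = (\<lambda>(k, l). p k * p l * interval_mean g k l)"
  define e where "e = (\<lambda>(k, l). p k * p l * ((g k + g l) / 2))"
  have E: "(e has_sum M) UNIV"
    unfolding e_def by (rule has_sum_pair_average[OF p0 g0 P G])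
  have ce: "c kl \<le> e kl" for kl
    using convex p0 by (auto simp: c_def e_def intro!: mult_left_mono simp del: times_divide_eq_right split: prod.splits)
  have c0: "0 \<le> c kl" for kl
    using p0 interval_mean_nonneg[OF g0] by (auto simp: c_def split: prod.splits)
  have "c summable_on UNIV"
    by (rule summable_on_comparison_test[of e]) (use E ce c0 in \<open>auto simp: summable_on_def\<close>)
  then obtain S where C: "(c has_sum S) UNIV"
    by (auto simp: summable_on_def)
  show thesis
  proof
    show "((\<lambda>i. g i * R0 p i) has_sum S) UNIV"
      using C unfolding c_def by (rule has_sum_R0_weighted[OF p0 g0])
    show "S \<le> M"
      using C E ce by (rule has_sum_mono)
    show "S < M" if "0 < p k" "0 < p l" "interval_mean g k l < (g k + g l) / 2" for k l
      using C E ce by (rule has_sum_strict_mono[of _ _ _ _ _ "(k, l)"]) (use that in \<open>auto simp: c_def e_def\<close>)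
  qed
qed

lemma prob_seqsD:
  assumes "p \<in> prob_seqs"
  shows "(p has_sum 1) UNIV" and "0 \<le> p k"
  using assms sums_nonneg_imp_has_sum[of p 1] by (auto simp: prob_seqs_def)

lemma prob_seqs_in_l1_space: "p \<in> prob_seqs \<Longrightarrow> p \<in> l1_space"
  by (auto simp: prob_seqs_def l1_space_def sums_iff)

lemma R0_nonneg: "(\<And>k. 0 \<le> p k) \<Longrightarrow> 0 \<le> R0 p i"
  unfolding R0_def by (rule infsum_nonneg) auto

lemma R0_in_prob_seqs:
  assumes "p \<in> prob_seqs"
  shows "R0 p \<in> prob_seqs"
proof -
  have "((\<lambda>i. 1 * R0 p i) has_sum 1) UNIV"
    using prob_seqsD[OF assms]
    by (intro R0_preserves_weighted_sum[where g = "\<lambda>_. 1"]) (auto simp: interval_mean_const)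
  then show ?thesis
    using R0_nonneg prob_seqsD(2)[OF assms] by (auto simp: prob_seqs_def dest: has_sum_imp_sums)
qed

lemma R0_preserves_mean:
  assumes "p \<in> prob_seqs" and "((\<lambda>k. real k * p k) has_sum \<mu>) UNIV"
  shows "((\<lambda>k. real k * R0 p k) has_sum \<mu>) UNIV"
  using prob_seqsD[OF assms(1)] assms(2)
  by (intro R0_preserves_weighted_sum[where g = real]) (auto simp: interval_mean_of_nat)

lemma has_sum_moment:
  assumes "\<And>k. 0 \<le> p k" and "has_moment m s p"
  shows "((\<lambda>k. \<bar>real k - m\<bar> powr s * p k) has_sum moment m s p) UNIV"
  using assms unfolding has_moment_def moment_def
  by (intro sums_nonneg_imp_has_sum summable_sums) auto

lemma moment_eqI:
  assumes "((\<lambda>k. \<bar>real k - m\<bar> powr s * p k) has_sum M) UNIV"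
  shows "has_moment m s p" and "moment m s p = M"
  using has_sum_imp_sums[OF assms] by (auto simp: has_moment_def moment_def sums_iff)

lemma moment_nonneg: "(\<And>k. 0 \<le> p k) \<Longrightarrow> has_moment m s p \<Longrightarrow> 0 \<le> moment m s p"
  unfolding has_moment_def moment_def by (rule suminf_nonneg) auto

lemma moment_R0_le:
  fixes s m :: real
  assumes s: "1 \<le> s" and p: "p \<in> prob_seqs" and hm: "has_moment m s p"
  shows "has_moment m s (R0 p)" and "moment m s (R0 p) \<le> moment m s p"
    and "0 < p k \<Longrightarrow> 0 < p l \<Longrightarrow> k + 2 \<le> l \<Longrightarrow> real k < m \<Longrightarrow> m < real l
      \<Longrightarrow> moment m s (R0 p) < moment m s p"
proof -
  define f where "f = (\<lambda>i::nat. \<bar>real i - m\<bar> powr s)"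
  have M: "((\<lambda>k. f k * p k) has_sum moment m s p) UNIV"
    unfolding f_def by (rule has_sum_moment[OF prob_seqsD(2)[OF p] hm])
  have convex: "interval_mean f k l \<le> (f k + f l) / 2" for k l
    unfolding f_def by (rule interval_mean_abs_powr_le[OF s])
  have f0: "0 \<le> f k" for k
    by (simp add: f_def)
  obtain S where S: "((\<lambda>i. f i * R0 p i) has_sum S) UNIV" "S \<le> moment m s p"
    and strict: "\<And>k l. 0 < p k \<Longrightarrow> 0 < p l \<Longrightarrow> interval_mean f k l < (f k + f l) / 2
      \<Longrightarrow> S < moment m s p"
    using R0_weighted_sum_le[OF prob_seqsD(2)[OF p] f0 prob_seqsD(1)[OF p] M convex] by blast
  have R: "has_moment m s (R0 p)" "moment m s (R0 p) = S"
    using moment_eqI[OF S(1)[unfolded f_def]] by auto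
  show "has_moment m s (R0 p)" "moment m s (R0 p) \<le> moment m s p"
    using R S(2) by auto
  show "moment m s (R0 p) < moment m s p"
    if "0 < p k" "0 < p l" "k + 2 \<le> l" "real k < m" "m < real l"
    using strict[OF that(1,2)] interval_mean_abs_powr_less[OF s that(3-5)] R by (simp add: f_def)
qed

lemma has_sum_zero_imp_neg_term:
  fixes f :: "'a \<Rightarrow> real"
  assumes "(f has_sum 0) A" "x \<in> A" "0 < f x"
  shows "\<exists>y\<in>A. f y < 0"
  using nonneg_has_sum_le_0D[OF assms(1) _ _ assms(2)] assms(3) by force

lemma atoms_around_mean:
  fixes m :: real
  assumes p: "p \<in> prob_seqs" and mean: "((\<lambda>k. real k * p k) has_sum m) UNIV" and "0 < p l"
  shows "m < real l \<Longrightarrow> \<exists>j. 0 < p j \<and> real j < m"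
    and "real l < m \<Longrightarrow> \<exists>j. 0 < p j \<and> m < real j"
proof -
  note P = prob_seqsD[OF p]
  have "((\<lambda>k. - (m * p k)) has_sum - (m * 1)) UNIV"
    using has_sum_cmult_right[OF P(1), of m] by (simp add: has_sum_uminus)
  from has_sum_add[OF mean this]
  have centred: "((\<lambda>k. (real k - m) * p k) has_sum 0) UNIV"
    by (simp add: algebra_simps)
  have reflected: "((\<lambda>k. (m - real k) * p k) has_sum 0) UNIV"
    using has_sum_cmult_right[OF centred, of "- 1"] by (simp add: algebra_simps)
  show "\<exists>j. 0 < p j \<and> real j < m" if "m < real l"
    using has_sum_zero_imp_neg_term[OF centred, of l] that \<open>0 < p l\<close> P(2)
    by (auto simp: mult_less_0_iff dest: leD)
  show "\<exists>j. 0 < p j \<and> m < real j" if "real l < m"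
    using has_sum_zero_imp_neg_term[OF reflected, of l] that \<open>0 < p l\<close> P(2)
    by (auto simp: mult_less_0_iff dest: leD)
qed

lemma support_consecutive:
  fixes m :: real
  assumes p: "p \<in> prob_seqs" and mean: "((\<lambda>k. real k * p k) has_sum m) UNIV"
    and no_straddle: "\<And>k l. 0 < p k \<Longrightarrow> 0 < p l \<Longrightarrow> k + 2 \<le> l \<Longrightarrow> \<not> (real k < m \<and> m < real l)"
  obtains a where "\<And>k. 0 < p k \<Longrightarrow> k = a \<or> k = Suc a"
proof -
  note P = prob_seqsD[OF p]
  note below = atoms_around_mean(1)[OF p mean] and above = atoms_around_mean(2)[OF p mean]
  have close: "l \<le> Suc k" if pk: "0 < p k" and pl: "0 < p l" and "k \<le> l" for k l
  proof (rule ccontr)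
    assume "\<not> l \<le> Suc k"
    then have kl: "k + 2 \<le> l" by simp
    then consider "m \<le> real k" | "real l \<le> m"
      using no_straddle[OF pk pl] by linarith
    then show False
    proof cases
      case 1
      then obtain j where "0 < p j" "real j < m" using below[OF pl] kl by auto
      then show False using no_straddle[of j l] pl 1 kl by auto
    next
      case 2
      then obtain j where "0 < p j" "m < real j" using above[OF pk] kl by auto
      then show False using no_straddle[of k j] pk 2 kl by auto
    qed
  qed
  have "\<exists>k. 0 < p k"
  proof (rule ccontr)
    assume "\<nexists>k. 0 < p k"
    then have "p = (\<lambda>_. 0)" using P(2) by (simp add: fun_eq_iff order.strict_iff_order)
    then show False using has_sum_unique[OF P(1) has_sum_0] by simp
  qed
  then have least: "0 < p (LEAST k. 0 < p k)" by (rule LeastI_ex)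
  show thesis
  proof (rule that)
    fix k assume "0 < p k"
    then show "k = (LEAST k. 0 < p k) \<or> k = Suc (LEAST k. 0 < p k)"
      using close[OF least] Least_le[of "\<lambda>k. 0 < p k" k] by fastforce
  qed
qed

lemma R0_eq_self_if_consecutive_support:
  assumes p: "p \<in> prob_seqs" and supp: "\<And>k. 0 < p k \<Longrightarrow> k = a \<or> k = Suc a"
  shows "R0 p = p"
proof
  fix i :: nat
  note P = prob_seqsD[OF p]
  have zero: "p k = 0" if "k \<notin> {a, Suc a}" for k
    using supp[of k] P(2)[of k] that by fastforce
  have support: "k \<in> {a, Suc a}" if "p k \<noteq> 0" for k
    using zero that by blast
  have "infsum p UNIV = infsum p {a, Suc a}"
    by (rule infsum_cong_neutral) (use zero in auto)
  then have one: "p a + p (Suc a) = 1" using infsumI[OF P(1)] by simp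
  let ?t = "\<lambda>(k::nat, l::nat). p k * p l / (1 + \<bar>real k - real l\<bar>)"
  let ?I = "{(k, l). min k l \<le> i \<and> i \<le> max k l}"
  have "R0 p i = infsum ?t (?I \<inter> {a, Suc a} \<times> {a, Suc a})"
    unfolding R0_def by (rule infsum_cong_neutral) (auto dest!: support)
  then have R: "R0 p i = sum ?t (?I \<inter> {a, Suc a} \<times> {a, Suc a})" by simp
  consider "i = a" | "i = Suc a" | "i \<notin> {a, Suc a}" by blast
  then show "R0 p i = p i"
  proof cases
    case 1
    then have "?I \<inter> {a, Suc a} \<times> {a, Suc a} = {(a, a), (a, Suc a), (Suc a, a)}" by auto
    then have "R0 p i = p a * (p a + p (Suc a))" unfolding R by (simp add: algebra_simps)
    then show ?thesis using 1 one by simp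
  next
    case 2
    then have "?I \<inter> {a, Suc a} \<times> {a, Suc a} = {(Suc a, Suc a), (a, Suc a), (Suc a, a)}" by auto
    then have "R0 p i = p (Suc a) * (p a + p (Suc a))" unfolding R by (simp add: algebra_simps)
    then show ?thesis using 2 one by simp
  next
    case 3
    then have "?I \<inter> {a, Suc a} \<times> {a, Suc a} = {}" by auto
    then show ?thesis unfolding R using zero[OF 3] by simp
  qed
qed

lemma moment_R0_eq_iff:
  fixes s m :: real
  assumes s: "1 \<le> s" and p: "p \<in> prob_seqs" and mean: "((\<lambda>k. real k * p k) has_sum m) UNIV"
    and hm: "has_moment m s p"
  shows "moment m s (R0 p) = moment m s p \<longleftrightarrow> R0 p = p"
proof
  assume eq: "moment m s (R0 p) = moment m s p"
  obtain a where "\<And>k. 0 < p k \<Longrightarrow> k = a \<or> k = Suc a"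
    using support_consecutive[OF p mean] moment_R0_le(3)[OF s p hm] eq by force
  then show "R0 p = p" by (rule R0_eq_self_if_consecutive_support[OF p])
qed simp

section \<open>The first moment as a finite linear functional\<close>

definition lower_deviation :: "real \<Rightarrow> (nat \<Rightarrow> real) \<Rightarrow> real" where
  "lower_deviation m p = 2 * (\<Sum>k | real k < m. (m - real k) * p k)"

lemma finite_nat_less_real: "finite {k::nat. real k < m}"
  by (rule finite_subset[of _ "{..nat \<lceil>m\<rceil>}"]) (auto simp: le_nat_iff le_ceiling_iff)

text \<open>With mass 1 and mean \<open>m\<close> we have \<open>\<Sum>k. (real k - m) * p k = 0\<close>, so the deviations above
  and below \<open>m\<close> balance and only the finitely many \<open>k < m\<close> matter.\<close>

lemma has_sum_moment1:
  fixes m :: real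
  assumes mass: "(p has_sum 1) UNIV" and mean: "((\<lambda>k. real k * p k) has_sum m) UNIV"
  shows "((\<lambda>k. \<bar>real k - m\<bar> powr 1 * p k) has_sum lower_deviation m p) UNIV"
proof -
  define Q where "Q = {k::nat. real k < m}"
  define g where "g k = (if k \<in> Q then (m - real k) * p k else 0)" for k
  have "(g has_sum (\<Sum>k\<in>Q. (m - real k) * p k)) Q"
    using finite_nat_less_real[of m] unfolding Q_def g_def by (intro has_sum_finiteI) auto
  then have G: "(g has_sum (\<Sum>k\<in>Q. (m - real k) * p k)) UNIV"
    by (rule has_sum_cong_neutral[THEN iffD2, rotated -1]) (auto simp: g_def)
  have "((\<lambda>k. - (m * p k)) has_sum - (m * 1)) UNIV"
    using has_sum_cmult_right[OF mass, of m] by (simp add: has_sum_uminus)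
  from has_sum_add[OF has_sum_add[OF mean this] has_sum_cmult_right[OF G, of 2]]
  have "((\<lambda>k. real k * p k + - (m * p k) + 2 * g k) has_sum lower_deviation m p) UNIV"
    by (simp add: lower_deviation_def Q_def)
  moreover have "real k * p k + - (m * p k) + 2 * g k = \<bar>real k - m\<bar> powr 1 * p k" for k
    by (auto simp: g_def Q_def algebra_simps)
  ultimately show ?thesis by simp
qed

lemma lower_deviation_lincomb:
  "lower_deviation m (\<lambda>k. a * x k + b * y k) = a * lower_deviation m x + b * lower_deviation m y"
  unfolding lower_deviation_def
  by (simp add: distrib_left mult.left_commute sum.distrib flip: sum_distrib_left)

lemma abs_le_l1_norm:
  assumes "summable (\<lambda>k. \<bar>z k\<bar>)"
  shows "\<bar>z k\<bar> \<le> l1_norm z"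
  using sum_le_suminf[OF assms, of "{k}"] assms by (simp add: l1_norm_def)

lemma abs_lower_deviation_le:
  assumes "summable (\<lambda>k. \<bar>z k\<bar>)"
  shows "\<bar>lower_deviation m z\<bar> \<le> 2 * \<bar>m\<bar> * l1_norm z"
proof -
  let ?Q = "{k::nat. real k < m}"
  have "\<bar>lower_deviation m z\<bar> \<le> 2 * (\<Sum>k\<in>?Q. \<bar>m\<bar> * \<bar>z k\<bar>)"
    unfolding lower_deviation_def
    by (auto simp: abs_mult intro!: order.trans[OF sum_abs] sum_mono mult_right_mono)
  also have "\<dots> = 2 * \<bar>m\<bar> * (\<Sum>k\<in>?Q. \<bar>z k\<bar>)"
    by (simp add: sum_distrib_left mult.assoc)
  also have "\<dots> \<le> 2 * \<bar>m\<bar> * l1_norm z"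
    using sum_le_suminf[OF assms finite_nat_less_real] assms
    by (simp add: l1_norm_def mult_left_mono)
  finally show ?thesis .
qed

lemma l1_space_lincomb:
  assumes "x \<in> l1_space" "y \<in> l1_space"
  shows "(\<lambda>k. a * x k + b * y k) \<in> l1_space"
proof -
  have "summable (\<lambda>k. \<bar>a\<bar> * \<bar>x k\<bar> + \<bar>b\<bar> * \<bar>y k\<bar>)"
    using assms by (intro summable_add summable_mult) (auto simp: l1_space_def)
  moreover have "norm \<bar>a * x k + b * y k\<bar> \<le> \<bar>a\<bar> * \<bar>x k\<bar> + \<bar>b\<bar> * \<bar>y k\<bar>" for k
    by (metis abs_mult abs_triangle_ineq real_norm_def abs_abs)
  ultimately show ?thesis
    unfolding l1_space_def by (auto intro: summable_comparison_test')
qed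

lemma Lipschitz_lower_deviation:
  "Lipschitz_continuous_map (submetric (metric (l1_space, l1_dist)) A) euclidean_metric (lower_deviation m)"
proof -
  have "\<bar>lower_deviation m x - lower_deviation m y\<bar> \<le> 2 * \<bar>m\<bar> * l1_dist x y"
    if "x \<in> l1_space" "y \<in> l1_space" for x y
    using abs_lower_deviation_le[OF l1_diff_summable[OF that], of m]
      lower_deviation_lincomb[of m 1 x "- 1" y]
    by (simp add: l1_dist_def)
  then show ?thesis
    by (auto simp: Lipschitz_continuous_map_def dist_real_def intro!: exI[of _ "2 * \<bar>m\<bar>"])
qed

lemma l1_has_derivative_within_coordinate:
  assumes "l1_has_derivative_within x v t T"
  shows "((\<lambda>s. (x s k - x t k) / (s - t)) \<longlongrightarrow> v k) (at t within T)"
proof -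
  have dl1: "\<And>s. x s - x t \<in> l1_space" and vl1: "v \<in> l1_space"
    and lim: "((\<lambda>s. l1_norm (\<lambda>k. (x s k - x t k) / (s - t) - v k)) \<longlongrightarrow> 0) (at t within T)"
    using assms unfolding l1_has_derivative_within_def by auto
  have "\<bar>(x s k - x t k) / (s - t) - v k\<bar> \<le> l1_norm (\<lambda>k. (x s k - x t k) / (s - t) - v k)" for s
  proof (rule abs_le_l1_norm)
    have "(\<lambda>k. 1 / (s - t) * (x s - x t) k + (- 1) * v k) \<in> l1_space"
      by (rule l1_space_lincomb[OF dl1 vl1])
    then show "summable (\<lambda>k. \<bar>(x s k - x t k) / (s - t) - v k\<bar>)"
      by (simp add: l1_space_def)
  qed
  then have "((\<lambda>s. (x s k - x t k) / (s - t) - v k) \<longlongrightarrow> 0) (at t within T)"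
    by (intro Lim_null_comparison[OF _ lim]) auto
  then show ?thesis by (simp add: LIM_zero_iff)
qed

lemma lower_deviation_difference_quotient:
  assumes "l1_has_derivative_within x v t T"
  shows "((\<lambda>s. (lower_deviation m (x s) - lower_deviation m (x t)) / (s - t))
    \<longlongrightarrow> lower_deviation m v) (at t within T)"
proof -
  have "(lower_deviation m (x s) - lower_deviation m (x t)) / (s - t)
      = lower_deviation m (\<lambda>k. (x s k - x t k) / (s - t))" for s
    using lower_deviation_lincomb[of m "1 / (s - t)" "x s" "- 1 / (s - t)" "x t"]
    by (simp add: diff_divide_distrib)
  moreover have "((\<lambda>s. lower_deviation m (\<lambda>k. (x s k - x t k) / (s - t)))
      \<longlongrightarrow> lower_deviation m v) (at t within T)"
    unfolding lower_deviation_def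
    by (intro tendsto_intros l1_has_derivative_within_coordinate[OF assms])
  ultimately show ?thesis by simp
qed

section \<open>Convexity and compactness of \<^const>\<open>Mset\<close>\<close>

lemma MsetD:
  assumes "p \<in> Mset r m C"
  shows "p \<in> prob_seqs" and "((\<lambda>k. real k * p k) has_sum m) UNIV"
    and "has_moment m r p" and "moment m r p \<le> C"
proof -
  show p: "p \<in> prob_seqs" and "has_moment m r p" and "moment m r p \<le> C"
    using assms by (auto simp: Mset_def)
  have "(\<lambda>k. real k * p k) sums m"
    using assms by (auto simp: Mset_def summable_sums)
  then show "((\<lambda>k. real k * p k) has_sum m) UNIV"
    by (rule sums_nonneg_imp_has_sum) (use prob_seqsD(2)[OF p] in auto)
qed

lemma Mset_moment1_eq:
  assumes "p \<in> Mset r m C"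
  shows "has_moment m 1 p" and "moment m 1 p = lower_deviation m p"
  using moment_eqI[OF has_sum_moment1[OF prob_seqsD(1) MsetD(2)]] MsetD(1)[OF assms] assms
  by auto

lemma sums_convex_combination:
  fixes w p q :: "nat \<Rightarrow> real"
  assumes "(\<lambda>k. w k * p k) sums a" "(\<lambda>k. w k * q k) sums b"
  shows "(\<lambda>k. w k * (t * p k + (1 - t) * q k)) sums (t * a + (1 - t) * b)"
proof -
  have "(\<lambda>k. t * (w k * p k) + (1 - t) * (w k * q k)) sums (t * a + (1 - t) * b)"
    using sums_add[OF sums_mult[OF assms(1), of t] sums_mult[OF assms(2), of "1 - t"]] .
  then show ?thesis by (simp add: algebra_simps)
qed

lemma Mset_convex:
  assumes p: "p \<in> Mset r m C" and q: "q \<in> Mset r m C" and t: "0 \<le> t" "t \<le> 1"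
  shows "(\<lambda>k. t * p k + (1 - t) * q k) \<in> Mset r m C"
proof -
  have mix: "(\<lambda>k. w k * p k) sums a \<Longrightarrow> (\<lambda>k. w k * q k) sums a \<Longrightarrow>
      (\<lambda>k. w k * (t * p k + (1 - t) * q k)) sums a" for w a
    using sums_convex_combination[of w p a q a t] by (simp add: algebra_simps)
  have "(\<lambda>k. 1 * (t * p k + (1 - t) * q k)) sums 1"
    using p q by (intro mix) (auto simp: Mset_def prob_seqs_def)
  moreover have "(\<lambda>k. real k * (t * p k + (1 - t) * q k)) sums m"
    using has_sum_imp_sums[OF MsetD(2)[OF p]] has_sum_imp_sums[OF MsetD(2)[OF q]] by (rule mix)
  moreover have "(\<lambda>k. \<bar>real k - m\<bar> powr r * (t * p k + (1 - t) * q k))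
      sums (t * moment m r p + (1 - t) * moment m r q)"
    using MsetD(3)[OF p] MsetD(3)[OF q]
    by (intro sums_convex_combination) (auto simp: has_moment_def moment_def summable_sums)
  moreover have "t * moment m r p + (1 - t) * moment m r q \<le> t * C + (1 - t) * C"
    using MsetD(4)[OF p] MsetD(4)[OF q] t by (intro add_mono mult_left_mono) auto
  moreover have "0 \<le> t * p k + (1 - t) * q k" for k
    using prob_seqsD(2)[OF MsetD(1)[OF p], of k] prob_seqsD(2)[OF MsetD(1)[OF q], of k] t by simp
  ultimately show ?thesis
    by (auto simp: Mset_def prob_seqs_def has_moment_def moment_def sums_iff algebra_simps)
qed

lemma bounded_seq_has_pointwise_convergent_subseq:
  fixes \<sigma> :: "nat \<Rightarrow> nat \<Rightarrow> real"
  assumes "\<And>n k. \<sigma> n k \<in> {a..b}"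
  obtains l \<rho> where "strict_mono \<rho>" "\<And>k. (\<lambda>n. \<sigma> (\<rho> n) k) \<longlonglongrightarrow> l k"
proof -
  have "compactin (product_topology (\<lambda>_. euclideanreal) UNIV) (PiE UNIV (\<lambda>_::nat. {a..b}))"
    by (subst compactin_PiE) auto
  then have "seq_compact (PiE UNIV (\<lambda>_::nat. {a..b}))"
    by (simp add: euclidean_product_topology compactin_euclidean_iff compact_imp_seq_compact)
  moreover have "\<sigma> n \<in> PiE UNIV (\<lambda>_. {a..b})" for n
    using assms by auto
  ultimately obtain l \<rho> where "strict_mono \<rho>" "(\<sigma> \<circ> \<rho>) \<longlonglongrightarrow> l"
    unfolding seq_compact_def by metis
  moreover have "(\<lambda>n. \<sigma> (\<rho> n) k) \<longlonglongrightarrow> l k" if "(\<sigma> \<circ> \<rho>) \<longlonglongrightarrow> l" for k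
    using continuous_on_tendsto_compose[of UNIV "\<lambda>x. x k", OF _ that] by (simp add: o_def)
  ultimately show thesis using that by blast
qed

lemma eventually_le_powr_dist:
  fixes r m \<delta> :: real
  assumes "1 < r" "0 < \<delta>"
  obtains N where "\<And>k. N \<le> k \<Longrightarrow> 1 + real k \<le> \<delta> * \<bar>real k - m\<bar> powr r"
proof -
  have "(\<lambda>x::real. 1 + x) \<in> o(\<lambda>x. (x - m) powr r)"
    using assms(1) by real_asymp
  then have "eventually (\<lambda>x. norm (1 + x) \<le> \<delta> * norm ((x - m) powr r)) at_top"
    using assms(2) by (rule landau_o.smallD)
  then have "eventually (\<lambda>k. norm (1 + real k) \<le> \<delta> * norm ((real k - m) powr r)) sequentially"
    by (rule eventually_compose_filterlim[OF _ filterlim_real_sequentially])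
  moreover have "eventually (\<lambda>k. m \<le> real k) sequentially"
    by (rule eventually_compose_filterlim[OF eventually_ge_at_top filterlim_real_sequentially])
  ultimately have "eventually (\<lambda>k. 1 + real k \<le> \<delta> * \<bar>real k - m\<bar> powr r) sequentially"
    by eventually_elim auto
  then show thesis
    using that unfolding eventually_sequentially by blast
qed

lemma eventually_le_small_powr_dist:
  fixes r m C \<epsilon> :: real
  assumes r: "1 < r" and "0 < \<epsilon>"
  obtains \<delta> N where "0 \<le> \<delta>" "\<delta> * C < \<epsilon>"
    "\<And>k. N \<le> k \<Longrightarrow> 1 + real k \<le> \<delta> * \<bar>real k - m\<bar> powr r"
proof -
  define \<delta> where "\<delta> = \<epsilon> / (\<bar>C\<bar> + 1)"
  have "0 < \<delta>"
    using \<open>0 < \<epsilon>\<close> by (simp add: \<delta>_def)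
  moreover have "\<delta> * C < \<delta> * (\<bar>C\<bar> + 1)"
    using \<open>0 < \<delta>\<close> by (intro mult_strict_left_mono) auto
  ultimately have \<delta>: "0 < \<delta>" "\<delta> * C < \<epsilon>"
    by (simp_all add: \<delta>_def)
  obtain N where N: "\<And>k. N \<le> k \<Longrightarrow> 1 + real k \<le> \<delta> * \<bar>real k - m\<bar> powr r"
    using eventually_le_powr_dist[OF r \<delta>(1)] by blast
  show thesis
    using that[of \<delta> N] \<delta> N by simp
qed

text \<open>Uniform tightness: the bound \<open>C\<close> on the \<open>r\<close>-th moment controls all tails at once.\<close>

lemma Mset_partial_sum_bounds:
  fixes w :: "nat \<Rightarrow> real"
  assumes p: "p \<in> Mset r m C" and w0: "\<And>k. 0 \<le> w k" and W: "(\<lambda>k. w k * p k) sums W"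
    and \<delta>: "0 \<le> \<delta>" and N: "\<And>k. N \<le> k \<Longrightarrow> w k \<le> \<delta> * \<bar>real k - m\<bar> powr r"
  shows "W - \<delta> * C \<le> (\<Sum>k<N. w k * p k)" and "(\<Sum>k<N. w k * p k) \<le> W"
proof -
  note p0 = prob_seqsD(2)[OF MsetD(1)[OF p]]
  define f where "f = (\<lambda>k. \<bar>real k - m\<bar> powr r * p k)"
  have F: "f sums moment m r p"
    using MsetD(3)[OF p] by (simp add: f_def has_moment_def moment_def summable_sums)
  have "W - (\<Sum>k<N. w k * p k) \<le> \<delta> * (moment m r p - (\<Sum>k<N. f k))"
  proof (rule sums_le[OF _ sums_split_initial_segment[OF W]
        sums_mult[OF sums_split_initial_segment[OF F]]])
    show "w (k + N) * p (k + N) \<le> \<delta> * f (k + N)" for k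
      using mult_right_mono[OF N[of "k + N"] p0[of "k + N"]] by (simp add: f_def mult.assoc)
  qed
  also have "\<dots> \<le> \<delta> * C"
  proof (intro mult_left_mono \<delta>)
    have "0 \<le> (\<Sum>k<N. f k)" using p0 by (auto simp: f_def intro: sum_nonneg)
    then show "moment m r p - (\<Sum>k<N. f k) \<le> C" using MsetD(4)[OF p] by linarith
  qed
  finally show "W - \<delta> * C \<le> (\<Sum>k<N. w k * p k)" by simp
  show "(\<Sum>k<N. w k * p k) \<le> W"
    using sum_le_suminf[of "\<lambda>k. w k * p k" "{..<N}"] W w0 p0 by (auto simp: sums_iff)
qed

lemma Mset_limit_sums:
  fixes w :: "nat \<Rightarrow> real"
  assumes r: "1 < r" and \<sigma>: "\<And>n. \<sigma> n \<in> Mset r m C" and lim: "\<And>k. (\<lambda>n. \<sigma> n k) \<longlonglongrightarrow> l k"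
    and w0: "\<And>k. 0 \<le> w k" and w_le: "\<And>k. w k \<le> 1 + real k"
    and W: "\<And>n. (\<lambda>k. w k * \<sigma> n k) sums W"
  shows "(\<lambda>k. w k * l k) sums W"
  unfolding sums_def
proof (rule LIMSEQ_I)
  fix \<epsilon> :: real assume "0 < \<epsilon>"
  obtain \<delta> N where \<delta>: "0 \<le> \<delta>" "\<delta> * C < \<epsilon>"
    and N: "\<And>k. N \<le> k \<Longrightarrow> 1 + real k \<le> \<delta> * \<bar>real k - m\<bar> powr r"
    using eventually_le_small_powr_dist[OF r \<open>0 < \<epsilon>\<close>] by blast
  have "norm ((\<Sum>k<N'. w k * l k) - W) < \<epsilon>" if "N \<le> N'" for N'
  proof -
    have "w k \<le> \<delta> * \<bar>real k - m\<bar> powr r" if "N' \<le> k" for k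
      using w_le[of k] N[of k] \<open>N \<le> N'\<close> that by linarith
    note bounds = Mset_partial_sum_bounds[OF \<sigma> w0 W \<delta>(1) this]
    have partial: "(\<lambda>n. \<Sum>k<N'. w k * \<sigma> n k) \<longlonglongrightarrow> (\<Sum>k<N'. w k * l k)"
      by (intro tendsto_intros lim)
    have "W - \<delta> * C \<le> (\<Sum>k<N'. w k * l k)"
      by (rule LIMSEQ_le_const[OF partial]) (use bounds(1) in blast)
    moreover have "(\<Sum>k<N'. w k * l k) \<le> W"
      by (rule LIMSEQ_le_const2[OF partial]) (use bounds(2) in blast)
    ultimately
    show ?thesis using \<delta>(2) by simp
  qed
  then show "\<exists>N. \<forall>N'\<ge>N. norm ((\<Sum>k<N'. w k * l k) - W) < \<epsilon>" by blast
qed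

lemma l1_dist_le_partial_sums:
  assumes x: "x \<in> prob_seqs" and y: "y \<in> prob_seqs"
  shows "l1_dist x y \<le> (\<Sum>k<N. \<bar>x k - y k\<bar>) + (1 - (\<Sum>k<N. x k)) + (1 - (\<Sum>k<N. y k))"
proof -
  have X: "x sums 1" and Y: "y sums 1" and x0: "0 \<le> x k" and y0: "0 \<le> y k" for k
    using x y by (auto simp: prob_seqs_def)
  have "summable (\<lambda>k. x k + y k)"
    using X Y by (auto intro: summable_add simp: sums_iff)
  then have D: "summable (\<lambda>k. \<bar>x k - y k\<bar>)"
    by (rule summable_comparison_test'[where N = 0]) (use x0 y0 in \<open>auto simp: abs_le_iff\<close>)
  have "(\<Sum>k. \<bar>x k - y k\<bar>) - (\<Sum>k<N. \<bar>x k - y k\<bar>) \<le> (1 - (\<Sum>k<N. x k)) + (1 - (\<Sum>k<N. y k))"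
    by (rule sums_le[OF _ sums_split_initial_segment[OF summable_sums[OF D]]
          sums_add[OF sums_split_initial_segment[OF X] sums_split_initial_segment[OF Y]]])
      (use x0 y0 in \<open>auto simp: abs_le_iff\<close>)
  then show ?thesis using D by (simp add: l1_dist_def l1_norm_def)
qed

lemma Mset_uniform_tail:
  assumes r: "1 < r" and "0 < \<epsilon>"
  obtains N where "\<And>q. q \<in> Mset r m C \<Longrightarrow> 1 - (\<Sum>k<N. q k) < \<epsilon>"
proof -
  obtain \<delta> N where \<delta>: "0 \<le> \<delta>" "\<delta> * C < \<epsilon>"
    and N: "\<And>k. N \<le> k \<Longrightarrow> 1 + real k \<le> \<delta> * \<bar>real k - m\<bar> powr r"
    using eventually_le_small_powr_dist[OF r \<open>0 < \<epsilon>\<close>] by blast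
  have N1: "1 \<le> \<delta> * \<bar>real k - m\<bar> powr r" if "N \<le> k" for k
    using N[OF that] by simp
  have "1 - (\<Sum>k<N. q k) < \<epsilon>" if q: "q \<in> Mset r m C" for q
  proof -
    have "(\<lambda>k. 1 * q k) sums 1"
      using MsetD(1)[OF q] by (simp add: prob_seqs_def)
    from Mset_partial_sum_bounds(1)[OF q _ this \<delta>(1), where N = N] N1 \<delta>(2)
    show ?thesis by simp
  qed
  then show thesis by (rule that)
qed

lemma Mset_closed_under_pointwise_limit:
  assumes r: "1 < r" and \<sigma>: "\<And>n. \<sigma> n \<in> Mset r m C" and lim: "\<And>k. (\<lambda>n. \<sigma> n k) \<longlonglongrightarrow> l k"
  shows "l \<in> Mset r m C"
proof -
  note \<sigma>0 = prob_seqsD(2)[OF MsetD(1)[OF \<sigma>]]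
  have l0: "0 \<le> l k" for k
    by (rule LIMSEQ_le_const[OF lim]) (use \<sigma>0 in auto)
  have mass: "(\<lambda>k. 1 * l k) sums 1"
  proof (rule Mset_limit_sums[OF r \<sigma> lim])
    show "(\<lambda>k. 1 * \<sigma> n k) sums 1" for n
      using MsetD(1)[OF \<sigma>[of n]] by (simp add: prob_seqs_def)
  qed simp_all
  have mean: "(\<lambda>k. real k * l k) sums m"
    using has_sum_imp_sums[OF MsetD(2)[OF \<sigma>]] by (intro Mset_limit_sums[OF r \<sigma> lim]) auto
  have partial_moment: "(\<Sum>k<N. \<bar>real k - m\<bar> powr r * l k) \<le> C" for N
  proof (rule LIMSEQ_le_const2)
    show "(\<lambda>n. \<Sum>k<N. \<bar>real k - m\<bar> powr r * \<sigma> n k) \<longlonglongrightarrow> (\<Sum>k<N. \<bar>real k - m\<bar> powr r * l k)"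
      by (intro tendsto_intros lim)
    have "(\<Sum>k<N. \<bar>real k - m\<bar> powr r * \<sigma> n k) \<le> moment m r (\<sigma> n)" for n
      using MsetD(3)[OF \<sigma>] \<sigma>0 unfolding has_moment_def moment_def
      by (intro sum_le_suminf) auto
    then show "\<exists>n0. \<forall>n\<ge>n0. (\<Sum>k<N. \<bar>real k - m\<bar> powr r * \<sigma> n k) \<le> C"
      using MsetD(4)[OF \<sigma>] order.trans by blast
  qed
  have hm: "has_moment m r l"
    unfolding has_moment_def by (rule summableI_nonneg_bounded[OF _ partial_moment]) (use l0 in auto)
  have "moment m r l \<le> C"
    unfolding moment_def by (rule suminf_le_const[OF hm[unfolded has_moment_def] partial_moment])
  then show "l \<in> Mset r m C"
    using l0 mass mean hm by (auto simp: Mset_def prob_seqs_def sums_iff)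
qed

lemma Mset_pointwise_limit_l1:
  assumes r: "1 < r" and \<sigma>: "\<And>n. \<sigma> n \<in> Mset r m C" and l: "l \<in> Mset r m C"
    and lim: "\<And>k. (\<lambda>n. \<sigma> n k) \<longlonglongrightarrow> l k"
  shows "(\<lambda>n. l1_dist (\<sigma> n) l) \<longlonglongrightarrow> 0"
proof (rule tendstoI)
  fix \<epsilon> :: real assume "0 < \<epsilon>"
  then obtain N where tail: "\<And>q. q \<in> Mset r m C \<Longrightarrow> 1 - (\<Sum>k<N. q k) < \<epsilon> / 4"
    using Mset_uniform_tail[OF r, of "\<epsilon> / 4"] by auto
  have "(\<lambda>n. \<Sum>k<N. \<bar>\<sigma> n k - l k\<bar>) \<longlonglongrightarrow> (\<Sum>k<N. \<bar>l k - l k\<bar>)"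
    by (intro tendsto_intros lim)
  then have "eventually (\<lambda>n. (\<Sum>k<N. \<bar>\<sigma> n k - l k\<bar>) < \<epsilon> / 2) sequentially"
    using \<open>0 < \<epsilon>\<close> by (intro order_tendstoD(2)) auto
  then show "eventually (\<lambda>n. dist (l1_dist (\<sigma> n) l) 0 < \<epsilon>) sequentially"
  proof eventually_elim
    case (elim n)
    then have "l1_dist (\<sigma> n) l < \<epsilon>"
      using l1_dist_le_partial_sums[OF MsetD(1)[OF \<sigma>] MsetD(1)[OF l], of n N]
        tail[OF \<sigma>[of n]] tail[OF l] by linarith
    then show ?case
      using l1.nonneg[of "\<sigma> n" l] by (simp add: dist_real_def)
  qed
qed

lemma Mset_compact:
  assumes r: "1 < r"
  shows "compactin l1.mtopology (Mset r m C)"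
  unfolding l1.compactin_sequentially
proof (intro conjI allI impI)
  have l1: "p \<in> l1_space" if "p \<in> Mset r m C" for p
    using prob_seqs_in_l1_space[OF MsetD(1)[OF that]] .
  then show "Mset r m C \<subseteq> l1_space" by blast
  fix \<sigma> :: "nat \<Rightarrow> nat \<Rightarrow> real" assume "range \<sigma> \<subseteq> Mset r m C"
  then have \<sigma>: "\<sigma> n \<in> Mset r m C" for n by auto
  have box: "\<sigma> n k \<in> {0..1}" for n k
  proof -
    note P = prob_seqsD[OF MsetD(1)[OF \<sigma>[of n]]]
    have "sum (\<sigma> n) {k} \<le> 1"
      by (rule finite_sum_le_has_sum[OF P(1)]) (use P(2) in auto)
    then show ?thesis using P(2)[of k] by simp
  qed
  obtain l \<rho> where \<rho>: "strict_mono \<rho>" and lim: "\<And>k. (\<lambda>n. \<sigma> (\<rho> n) k) \<longlonglongrightarrow> l k"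
    by (rule bounded_seq_has_pointwise_convergent_subseq[of \<sigma> 0 1, OF box]) blast
  have lM: "l \<in> Mset r m C"
    by (rule Mset_closed_under_pointwise_limit[OF r, of "\<lambda>n. \<sigma> (\<rho> n)", OF \<sigma> lim])
  have L: "(\<lambda>n. l1_dist (\<sigma> (\<rho> n)) l) \<longlonglongrightarrow> 0"
    by (rule Mset_pointwise_limit_l1[OF r, of "\<lambda>n. \<sigma> (\<rho> n)", OF \<sigma> lM lim])
  have "limitin l1.mtopology (\<sigma> \<circ> \<rho>) l sequentially"
    unfolding l1.limitin_metric
  proof (intro conjI allI impI)
    show "l \<in> l1_space" using l1[OF lM] .
    fix \<epsilon> :: real assume "0 < \<epsilon>"
    then have "eventually (\<lambda>n. l1_dist (\<sigma> (\<rho> n)) l < \<epsilon>) sequentially"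
      by (rule order_tendstoD(2)[OF L])
    then show "\<forall>\<^sub>F n in sequentially. (\<sigma> \<circ> \<rho>) n \<in> l1_space \<and> l1_dist ((\<sigma> \<circ> \<rho>) n) l < \<epsilon>"
      by eventually_elim (simp add: l1[OF \<sigma>])
  qed
  then show "\<exists>l \<rho>. l \<in> Mset r m C \<and> strict_mono \<rho> \<and> limitin l1.mtopology (\<sigma> \<circ> \<rho>) l sequentially"
    using lM \<rho> by (intro exI[of _ l] exI[of _ \<rho>] conjI)
qed

section \<open>Continuity and the Lyapunov property of \<open>M\<^sub>1\<close>\<close>

lemma Mset_moment1_continuous:
  "continuous_map (subtopology l1.mtopology (Mset r m C)) euclideanreal (moment m 1)"
proof -
  have "Lipschitz_continuous_map (submetric (metric (l1_space, l1_dist)) (Mset r m C))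
      euclidean_metric (moment m 1)"
    by (rule Lipschitz_continuous_map_eq[OF Lipschitz_lower_deviation[of _ m]])
      (use Mset_moment1_eq(2) in auto)
  then show ?thesis
    by (metis Lipschitz_continuous_imp_continuous_map l1.mtopology_of mtopology_of_euclidean
        mtopology_of_submetric)
qed

lemma moment1_Lyapunov:
  assumes p0: "p0 \<in> Mset r m C" and T: "0 < T" and x0: "x 0 = p0"
    and xin: "\<And>t. t \<in> {0..<T} \<Longrightarrow> x t \<in> Mset r m C"
    and der: "l1_has_derivative_within x (\<lambda>k. R0 p0 k - p0 k) 0 {0..<T}"
  shows "Liminf (at_right 0) (\<lambda>t. ereal ((moment m 1 (x t) - moment m 1 p0) / t)) \<le> 0"
proof -
  define L where "L = lower_deviation m (\<lambda>k. R0 p0 k - p0 k)"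
  have "at (0::real) within {0..<T} = at_right 0"
    by (rule at_within_nhd[of 0 "{-T<..<T}"]) (use T in auto)
  then have "((\<lambda>t. (lower_deviation m (x t) - lower_deviation m p0) / t) \<longlongrightarrow> L) (at_right 0)"
    using lower_deviation_difference_quotient[OF der, of m] by (simp add: L_def x0)
  moreover have "eventually (\<lambda>t. (lower_deviation m (x t) - lower_deviation m p0) / t
      = (moment m 1 (x t) - moment m 1 p0) / t) (at_right 0)"
    using eventually_at_right_real[OF T]
    by eventually_elim (simp add: Mset_moment1_eq(2)[OF xin] Mset_moment1_eq(2)[OF p0])
  ultimately have "((\<lambda>t. (moment m 1 (x t) - moment m 1 p0) / t) \<longlongrightarrow> L) (at_right 0)"
    by (rule Lim_transform_eventually)
  then have "Liminf (at_right 0) (\<lambda>t. ereal ((moment m 1 (x t) - moment m 1 p0) / t)) = ereal L"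
    by (intro lim_imp_Liminf tendsto_ereal) simp_all
  moreover have "L = moment m 1 (R0 p0) - moment m 1 p0"
  proof -
    note p = MsetD(1,2)[OF p0]
    have "moment m 1 (R0 p0) = lower_deviation m (R0 p0)"
      using moment_eqI(2)[OF has_sum_moment1[OF prob_seqsD(1)[OF R0_in_prob_seqs[OF p(1)]]
            R0_preserves_mean[OF p]]] .
    then show ?thesis
      using lower_deviation_lincomb[of m 1 "R0 p0" "- 1" p0] Mset_moment1_eq(2)[OF p0]
      by (simp add: L_def)
  qed
  moreover have "moment m 1 (R0 p0) \<le> moment m 1 p0"
    using moment_R0_le(2)[OF _ MsetD(1)[OF p0] Mset_moment1_eq(1)[OF p0]] by simp
  ultimately show ?thesis by simp
qed

theorem lemma2:
  fixes r m C :: real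
  assumes "r > 1" and "0 \<le> m" and "0 \<le> C"
  shows
    \<comment> \<open>compact (in the l^1 metric) and convex\<close>
    "compactin l1.mtopology (Mset r m C)
     \<and> (\<forall>p\<in>Mset r m C. \<forall>q\<in>Mset r m C. \<forall>t::real. 0 \<le> t \<and> t \<le> 1 \<longrightarrow>
          (\<lambda>k. t * p k + (1 - t) * q k) \<in> Mset r m C)
     \<comment> \<open>M_1 and M_r decrease under R_0, with equality iff fixed point\<close>
     \<and> (\<forall>s\<in>{1, r}. \<forall>p\<in>Mset r m C.
          has_moment m s p \<and> has_moment m s (R0 p)
          \<and> moment m s (R0 p) \<le> moment m s p
          \<and> (moment m s (R0 p) = moment m s p \<longleftrightarrow> R0 p = p))
     \<comment> \<open>M_1 is a continuous map from Mset to [0, infinity)\<close>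
     \<and> (\<forall>p\<in>Mset r m C. 0 \<le> moment m 1 p)
     \<and> continuous_map (subtopology l1.mtopology (Mset r m C)) euclideanreal (moment m 1)
     \<comment> \<open>M_1 is a Lyapunov function for dp/dt = R_0(p) - p on Mset\<close>
     \<and> (\<forall>p0\<in>Mset r m C. \<forall>T>0. \<forall>x :: real \<Rightarrow> nat \<Rightarrow> real.
          x 0 = p0 \<and> (\<forall>t\<in>{0..<T}. x t \<in> Mset r m C)
          \<and> (\<forall>t\<in>{0..<T}. l1_has_derivative_within x (\<lambda>k. R0 (x t) k - x t k) t {0..<T})
          \<longrightarrow> Liminf (at_right 0) (\<lambda>t. ereal ((moment m 1 (x t) - moment m 1 p0) / t)) \<le> 0)"
proof (intro conjI ballI allI impI)
  show "compactin l1.mtopology (Mset r m C)"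
    using Mset_compact assms(1) .
next
  fix p q and t :: real
  assume "p \<in> Mset r m C" "q \<in> Mset r m C" "0 \<le> t \<and> t \<le> 1"
  then show "(\<lambda>k. t * p k + (1 - t) * q k) \<in> Mset r m C"
    using Mset_convex by blast
next
  fix s p assume s: "s \<in> {1, r}" and p: "p \<in> Mset r m C"
  have "1 \<le> s" using s assms(1) by auto
  moreover have "has_moment m s p"
    using s Mset_moment1_eq(1)[OF p] MsetD(3)[OF p] by auto
  ultimately show "has_moment m s p" "has_moment m s (R0 p)"
    "moment m s (R0 p) \<le> moment m s p" "moment m s (R0 p) = moment m s p \<longleftrightarrow> R0 p = p"
    using moment_R0_le moment_R0_eq_iff MsetD(1,2)[OF p] by auto
next
  fix p assume "p \<in> Mset r m C"
  then show "0 \<le> moment m 1 p"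
    using moment_nonneg prob_seqsD(2) MsetD(1) Mset_moment1_eq(1) by blast
next
  show "continuous_map (subtopology l1.mtopology (Mset r m C)) euclideanreal (moment m 1)"
    by (rule Mset_moment1_continuous)
next
  fix p0 T x
  assume "p0 \<in> Mset r m C" "0 < T" "x 0 = p0 \<and> (\<forall>t\<in>{0..<T}. x t \<in> Mset r m C)
    \<and> (\<forall>t\<in>{0..<T}. l1_has_derivative_within x (\<lambda>k. R0 (x t) k - x t k) t {0..<T})"
  then show "Liminf (at_right 0) (\<lambda>t. ereal ((moment m 1 (x t) - moment m 1 p0) / t)) \<le> 0"
    using moment1_Lyapunov[of p0 r m C T x] by auto
qed

end
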